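(* Let $(X,\mu),(Y,\nu),(Z,\rho)$ be standard probability spaces with quotient maps $q:X\to Y$ and $p:X\to Z$. View $L^\infty(Y,\nu)$ and $L^\infty(Z,\rho)$ as subalgebras of $L^\infty(X,\mu)$ via $f\mapsto f\circ q$ and $f\mapsto f\circ p$, and let $E:L^\infty(X,\mu)\to L^\infty(Y,\nu)$ be the ($\mu$-preserving) conditional expectation. Suppose there exist $a_1,\dots,a_n\in L^\infty(X,\mu)$ and $C>0$ such that $\sum_{i=1}^n\|E(fa_i)\|_2^2\ge C$ for all $f\in L^\infty(Z,\rho)$ with $|f|=1$ a.e. Then $p$ locally factors through $q$.
   Context: A quotient map is a measurable, measure preserving, onto map. $\|g\|_2=(\int|g|^2d\mu)^{1/2}$. Locally factors: disintegrate $\mu=\int_Y\mu_y\,d\nu(y)$ with $\mu_y(q^{-1}(\{y\}))=1$; $p$ locally factors through $q$ if the set of $y\in Y$ with $(\mu_y\times\mu_y)(\{(x_1,x_2)\in X\times X: p(x_1)=p(x_2)\})>0$ has positive $\nu$-measure. *)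

theory Defs
  imports "HOL-Probability.Probability"
begin

definition standard_prob_space :: "'a::polish_space measure \<Rightarrow> bool" where
  "standard_prob_space M \<longleftrightarrow> prob_space M \<and> sets M = sets borel"

definition mp_quotient_map :: "'a measure \<Rightarrow> 'b measure \<Rightarrow> ('a \<Rightarrow> 'b) \<Rightarrow> bool" where
  "mp_quotient_map M N q \<longleftrightarrow> q \<in> measurable M N \<and> distr M N q = N \<and> q ` space M = space N"

definition cond_exp_c :: "'a measure \<Rightarrow> 'a measure \<Rightarrow> ('a \<Rightarrow> complex) \<Rightarrow> ('a \<Rightarrow> complex)" where
  "cond_exp_c M F g = (\<lambda>x. Complex (real_cond_exp M F (\<lambda>y. Re (g y)) x)
                                     (real_cond_exp M F (\<lambda>y. Im (g y)) x))"

definition Linfty :: "'a measure \<Rightarrow> ('a \<Rightarrow> complex) \<Rightarrow> bool" where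
  "Linfty M a \<longleftrightarrow> a \<in> borel_measurable M \<and> (\<exists>B. AE x in M. cmod (a x) \<le> B)"

definition disintegration :: "'a measure \<Rightarrow> 'b measure \<Rightarrow> ('a \<Rightarrow> 'b) \<Rightarrow> ('b \<Rightarrow> 'a measure) \<Rightarrow> bool" where
  "disintegration M N q K \<longleftrightarrow>
     K \<in> measurable N (subprob_algebra M) \<and>
     (AE y in N. prob_space (K y)) \<and>
     (AE y in N. emeasure (K y) (q -` {y} \<inter> space M) = 1) \<and>
     (\<forall>A\<in>sets M. emeasure M A = (\<integral>\<^sup>+ y. emeasure (K y) A \<partial>N))"

definition locally_factors :: "'a measure \<Rightarrow> 'b measure \<Rightarrow> ('a \<Rightarrow> 'b) \<Rightarrow> ('a \<Rightarrow> 'c) \<Rightarrow> bool" where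
  "locally_factors M N q p \<longleftrightarrow>
     (\<forall>K. disintegration M N q K \<longrightarrow>
        emeasure N {y \<in> space N.
           emeasure (K y \<Otimes>\<^sub>M K y) {(x1, x2) \<in> space M \<times> space M. p x1 = p x2} > 0} > 0)"

end

theory Submission
  imports Defs
begin

text \<open>
  If p does not locally factor through q, there is a disintegration y \<mapsto> \<mu>_y of \<mu> over q
  such that for \<nu>-almost every y the measure \<mu>_y \<times> \<mu>_y is carried by the pairs with
  p x1 \<noteq> p x2. Fix an injective Borel map \<phi> from Z into [0, 2\<pi>) and test the hypothesis
  on the characters f_t = e^{i t \<phi>}. Since E g (x) = \<integral> g d\<mu>_{q x}, the quantity
  \<parallel>E (f_t a)\<parallel>_2^2 equals \<integral> |\<integral> e^{i t \<phi>(p x)} a(x) d\<mu>_y(x)|^2 d\<nu>(y),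
  and averaging over t < T turns it into an integral over \<mu>_y \<times> \<mu>_y of
  a(x1) conj(a(x2)) times the mean (1/T) \<Sum>_{t<T} e^{i t (\<phi>(p x1) - \<phi>(p x2))}.
  Off the diagonal p x1 = p x2 this mean tends to 0, so dominated convergence gives C \<le> 0.
\<close>

section \<open>Injective Borel maps into the reals\<close>

lemma quarter_digits_inj:
  fixes b c :: "nat \<Rightarrow> real"
  assumes b: "\<And>j. b j \<in> {0,1}" and c: "\<And>j. c j \<in> {0,1}"
    and eq: "(\<Sum>j. (1/4)^j * b j) = (\<Sum>j. (1/4)^j * c j)"
  shows "b = c"
proof (rule ccontr)
  assume "b \<noteq> c"
  then obtain j0 where "b j0 \<noteq> c j0" by auto
  define m where "m = (LEAST j. b j \<noteq> c j)"
  have bm: "b m \<noteq> c m"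
    unfolding m_def by (rule LeastI[of _ j0]) fact
  have below_m: "b j = c j" if "j < m" for j
    using not_less_Least[of j "\<lambda>j. b j \<noteq> c j"] that unfolding m_def by blast
  define d where "d j = (1/4::real)^j * (b j - c j)" for j
  have d_le: "norm (d j) \<le> (1/4)^j" for j
    using b[of j] c[of j] by (auto simp: d_def abs_mult)
  have geom: "summable (\<lambda>j. (1/4::real)^j)"
    by (rule summable_geometric) simp
  have "summable d"
    by (rule summable_comparison_test'[OF geom d_le])
  moreover have "suminf d = 0"
  proof -
    have "summable (\<lambda>j. (1/4::real)^j * e j)" if "\<And>j. e j \<in> {0,1}" for e
    proof (rule summable_comparison_test'[OF geom])
      show "norm ((1/4::real)^j * e j) \<le> (1/4)^j" for j
        using that[of j] by auto
    qed
    then have "suminf d = (\<Sum>j. (1/4)^j * b j) - (\<Sum>j. (1/4)^j * c j)"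
      unfolding d_def right_diff_distrib using b c by (intro suminf_diff [symmetric]) auto
    then show ?thesis
      using eq by simp
  qed
  moreover have "sum d {..<Suc m} = d m"
    by (simp add: d_def below_m)
  ultimately have "d m = - (\<Sum>j. d (j + Suc m))"
    using suminf_split_initial_segment[of d "Suc m"] by simp
  then have "norm (d m) \<le> (\<Sum>j. (1/4)^(j + Suc m))"
    using norm_suminf_le[OF d_le summable_ignore_initial_segment[OF geom], of "Suc m"]
    by (simp only: norm_minus_cancel)
  also have "\<dots> = (1/4)^m / 3"
    using suminf_mult2[OF geom, of "(1/4)^Suc m"] by (simp add: power_add suminf_geometric)
  finally show False
    using b[of m] c[of m] bm by (auto simp: d_def)
qed

lemma exists_inj_borel_measurable_real:
  "\<exists>\<phi>::'a::{second_countable_topology, t1_space} \<Rightarrow> real.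
     \<phi> \<in> borel_measurable borel \<and> inj \<phi> \<and> range \<phi> \<subseteq> {0..<2*pi}"
proof -
  obtain \<B> :: "'a set set" where "countable \<B>" and basis: "topological_basis \<B>"
    using ex_countable_basis by blast
  have "\<B> \<noteq> {}"
    using topological_basisE[OF basis open_UNIV UNIV_I[of undefined]] by blast
  define U where "U j = from_nat_into \<B> j" for j
  have U_open: "open (U j)" for j
    unfolding U_def by (rule topological_basis_open[OF basis from_nat_into[OF \<open>\<B> \<noteq> {}\<close>]])
  define \<phi> where "\<phi> z = (\<Sum>j. (1/4::real)^j * indicator (U j) z)" for z
  have geom: "summable (\<lambda>j. (1/4::real)^j)"
    by (rule summable_geometric) simp
  have summable: "summable (\<lambda>j. (1/4::real)^j * indicator (U j) z)" for z
    by (rule summable_comparison_test'[OF geom]) (simp add: indicator_def)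
  have "\<phi> \<in> borel_measurable borel"
    unfolding \<phi>_def using U_open by (intro borel_measurable_suminf) measurable
  moreover have "\<phi> z \<in> {0..<2*pi}" for z
  proof -
    have "0 \<le> \<phi> z"
      unfolding \<phi>_def by (rule suminf_nonneg[OF summable]) simp
    moreover have "\<phi> z \<le> (\<Sum>j. (1/4::real)^j)"
      unfolding \<phi>_def by (rule suminf_le[OF _ summable geom]) (simp add: indicator_def)
    moreover have "(\<Sum>j. (1/4::real)^j) < 2*pi"
      using pi_gt3 by (simp add: suminf_geometric)
    ultimately show ?thesis by simp
  qed
  moreover have "inj \<phi>"
  proof (rule injI, rule ccontr)
    fix z1 z2 assume "\<phi> z1 = \<phi> z2" "z1 \<noteq> z2"
    then have same_digits: "(\<lambda>j. indicator (U j) z1 :: real) = (\<lambda>j. indicator (U j) z2)"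
      by (intro quarter_digits_inj) (auto simp: \<phi>_def indicator_def)
    obtain V where "open V" "z1 \<in> V" "z2 \<notin> V"
      using t1_space[OF \<open>z1 \<noteq> z2\<close>] by blast
    then obtain B where "B \<in> \<B>" "z1 \<in> B" "B \<subseteq> V"
      using topological_basisE[OF basis] by metis
    then obtain j where "U j = B"
      using from_nat_into_surj[OF \<open>countable \<B>\<close>] unfolding U_def by metis
    then have "indicator (U j) z1 \<noteq> (indicator (U j) z2 :: real)"
      using \<open>z1 \<in> B\<close> \<open>B \<subseteq> V\<close> \<open>z2 \<notin> V\<close> by auto
    then show False
      using same_digits by metis
  qed
  ultimately show ?thesis by blast
qed

section \<open>Averages of characters\<close>

lemma borel_measurable_cnj [measurable]:
  "f \<in> borel_measurable M \<Longrightarrow> (\<lambda>x. cnj (f x)) \<in> borel_measurable M"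
  by (erule measurable_compose) (intro borel_measurable_continuous_onI continuous_intros)

lemma borel_measurable_cis [measurable]:
  "f \<in> borel_measurable M \<Longrightarrow> (\<lambda>x. cis (f x)) \<in> borel_measurable M"
  by (erule measurable_compose) (intro borel_measurable_continuous_onI continuous_intros)

definition cis_mean :: "nat \<Rightarrow> real \<Rightarrow> complex" where
  "cis_mean T d = (\<Sum>t<T. cis (real t * d)) / of_nat T"

lemma sum_cis_eq_cis_mean: "(\<Sum>t<T. cis (real t * d)) = of_nat T * cis_mean T d"
  by (cases "T = 0") (simp_all add: cis_mean_def)

lemma norm_cis_mean_le_1: "norm (cis_mean T d) \<le> 1"
proof (cases "T = 0")
  case False
  have "norm (\<Sum>t<T. cis (real t * d)) \<le> (\<Sum>t<T. norm (cis (real t * d)))"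
    by (rule norm_sum)
  then show ?thesis
    using False by (simp add: cis_mean_def norm_divide divide_le_eq)
qed (simp add: cis_mean_def)

lemma borel_measurable_cis_mean [measurable]:
  "f \<in> borel_measurable M \<Longrightarrow> (\<lambda>x. cis_mean T (f x)) \<in> borel_measurable M"
  unfolding cis_mean_def by (intro borel_measurable_divide borel_measurable_const) measurable

lemma cis_mean_tendsto_0:
  assumes "d \<noteq> 0" and "\<bar>d\<bar> < 2 * pi"
  shows "(\<lambda>T. cis_mean T d) \<longlonglongrightarrow> 0"
proof -
  have "cis d \<noteq> 1"
  proof
    assume "cis d = 1"
    then obtain k :: int where k: "d = real_of_int k * 2 * pi"
      using cos_one_2pi_int[of d] by (metis cis.sel(1) one_complex.sel(1))
    with assms have "1 \<le> \<bar>real_of_int k\<bar>" by auto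
    then have "2 * pi \<le> \<bar>d\<bar>" using k by (simp add: abs_mult)
    with assms show False by simp
  qed
  define K where "K = 2 / norm (1 - cis d)"
  have bound: "norm (cis_mean T d) \<le> K / real T" for T
  proof -
    have "(\<Sum>t<T. cis (real t * d)) = (\<Sum>t<T. cis d ^ t)"
      by (rule sum.cong) (simp_all only: Complex.DeMoivre)
    also have "\<dots> = (1 - cis d ^ T) / (1 - cis d)"
      using \<open>cis d \<noteq> 1\<close> by (simp add: sum_gp_strict)
    finally have "(\<Sum>t<T. cis (real t * d)) = (1 - cis d ^ T) / (1 - cis d)" .
    moreover have "norm (1 - cis d ^ T) \<le> 2"
      using norm_triangle_ineq4[of 1 "cis d ^ T"] by (simp add: norm_power)
    ultimately have "norm (\<Sum>t<T. cis (real t * d)) \<le> K"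
      unfolding K_def by (simp only: norm_divide) (intro divide_right_mono; simp)
    then show ?thesis
      by (simp add: cis_mean_def norm_divide divide_right_mono)
  qed
  have "(\<lambda>T. K / real T) \<longlonglongrightarrow> 0"
    by (rule lim_const_over_n)
  then show ?thesis
    by (rule Lim_null_comparison[rotated]) (use bound in auto)
qed

lemma sum_cis_mult_cnj:
  "(\<Sum>t<T. cis (real t * x) * a * cnj (cis (real t * y) * b)) = a * cnj b * (of_nat T * cis_mean T (x - y))"
proof -
  have "cis (real t * x) * cnj (cis (real t * y)) = cis (real t * (x - y))" for t
    by (simp add: cis_cnj cis_mult algebra_simps)
  then have "cis (real t * x) * a * cnj (cis (real t * y) * b) = a * cnj b * cis (real t * (x - y))" for t
    by (metis complex_cnj_mult mult.commute mult.left_commute)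
  then have "(\<Sum>t<T. cis (real t * x) * a * cnj (cis (real t * y) * b)) = (\<Sum>t<T. a * cnj b * cis (real t * (x - y)))"
    by (rule sum.cong[OF refl])
  then show ?thesis
    by (simp only: sum_distrib_left[symmetric] sum_cis_eq_cis_mean)
qed

lemma (in finite_measure) integral_cis_mean_tendsto_0:
  assumes [measurable]: "f \<in> borel_measurable M"
    and "AE x in M. f x \<noteq> 0" and "AE x in M. \<bar>f x\<bar> < 2 * pi"
  shows "(\<lambda>T. \<integral>x. cmod (cis_mean T (f x)) \<partial>M) \<longlonglongrightarrow> 0"
proof -
  have "(\<lambda>T. \<integral>x. cmod (cis_mean T (f x)) \<partial>M) \<longlonglongrightarrow> (\<integral>x. 0 \<partial>M)"
  proof (rule integral_dominated_convergence[where w="\<lambda>_. 1"])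
    show "AE x in M. (\<lambda>T. cmod (cis_mean T (f x))) \<longlonglongrightarrow> 0"
      using assms(2,3) by eventually_elim (intro tendsto_norm_zero cis_mean_tendsto_0)
  qed (auto simp: norm_cis_mean_le_1)
  then show ?thesis
    by simp
qed

lemma (in finite_measure) integrable_pair_mult_cnj:
  fixes u :: "'a \<Rightarrow> complex"
  assumes [measurable]: "u \<in> borel_measurable M" and bound: "\<And>x. x \<in> space M \<Longrightarrow> cmod (u x) \<le> B"
  shows "integrable (M \<Otimes>\<^sub>M M) (\<lambda>z. u (fst z) * cnj (u (snd z)))"
proof -
  interpret MM: finite_measure "M \<Otimes>\<^sub>M M"
    using finite_measure_pair_measure finite_measure_axioms by blast
  show ?thesis
  proof (rule MM.integrable_const_bound[where B="B * B"])
    show "AE z in M \<Otimes>\<^sub>M M. norm (u (fst z) * cnj (u (snd z))) \<le> B * B"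
    proof (rule AE_I2)
      fix z assume "z \<in> space (M \<Otimes>\<^sub>M M)"
      then have "cmod (u (fst z)) \<le> B" "cmod (u (snd z)) \<le> B"
        using bound by (auto simp: space_pair_measure)
      then show "norm (u (fst z) * cnj (u (snd z))) \<le> B * B"
        unfolding norm_mult complex_mod_cnj by (intro mult_mono) (auto intro: order_trans[OF norm_ge_zero])
    qed
  qed measurable
qed

lemma (in finite_measure) norm_integral_sq_eq_integral_pair:
  fixes u :: "'a \<Rightarrow> complex"
  assumes u: "u \<in> borel_measurable M" and bound: "\<And>x. x \<in> space M \<Longrightarrow> cmod (u x) \<le> B"
  shows "complex_of_real ((cmod (\<integral>x. u x \<partial>M))\<^sup>2) = (\<integral>z. u (fst z) * cnj (u (snd z)) \<partial>(M \<Otimes>\<^sub>M M))"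
proof -
  interpret pair_sigma_finite M M
    by unfold_locales
  have "integrable (M \<Otimes>\<^sub>M M) (\<lambda>(x, y). u x * cnj (u y))"
    using integrable_pair_mult_cnj[OF u bound] by (simp add: case_prod_unfold)
  then have "(\<integral>x. (\<integral>y. u x * cnj (u y) \<partial>M) \<partial>M) = (\<integral>(x, y). u x * cnj (u y) \<partial>(M \<Otimes>\<^sub>M M))"
    by (rule integral_fst)
  moreover have "complex_of_real ((cmod (\<integral>x. u x \<partial>M))\<^sup>2) = (\<integral>x. (\<integral>y. u x * cnj (u y) \<partial>M) \<partial>M)"
    by (simp del: of_real_power add: complex_norm_square)
  ultimately show ?thesis
    by (simp add: case_prod_unfold)
qed

lemma (in finite_measure) sum_norm_integral_cis_sq_le:
  fixes a :: "'a \<Rightarrow> complex" and \<psi> :: "'a \<Rightarrow> real"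
  assumes a[measurable]: "a \<in> borel_measurable M" and bound: "\<And>x. x \<in> space M \<Longrightarrow> cmod (a x) \<le> B"
    and [measurable]: "\<psi> \<in> borel_measurable M"
  shows "(\<Sum>t<T. (cmod (\<integral>x. cis (real t * \<psi> x) * a x \<partial>M))\<^sup>2)
     \<le> real T * B\<^sup>2 * (\<integral>z. cmod (cis_mean T (\<psi> (fst z) - \<psi> (snd z))) \<partial>(M \<Otimes>\<^sub>M M))"
proof -
  interpret MM: finite_measure "M \<Otimes>\<^sub>M M"
    using finite_measure_pair_measure finite_measure_axioms by blast
  define u where "u t x = cis (real t * \<psi> x) * a x" for t x
  define W where "W z = cmod (cis_mean T (\<psi> (fst z) - \<psi> (snd z)))" for z
  have [measurable]: "u t \<in> borel_measurable M" for t
    unfolding u_def by measurable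
  have u_bound: "cmod (u t x) \<le> B" if "x \<in> space M" for t x
    using bound[OF that] by (simp add: u_def norm_mult)
  have pair: "complex_of_real ((cmod (\<integral>x. u t x \<partial>M))\<^sup>2) = (\<integral>z. u t (fst z) * cnj (u t (snd z)) \<partial>(M \<Otimes>\<^sub>M M))" for t
    by (rule norm_integral_sq_eq_integral_pair[OF _ u_bound[where t=t]]) simp
  have u_integrable: "integrable (M \<Otimes>\<^sub>M M) (\<lambda>z. u t (fst z) * cnj (u t (snd z)))" for t
    by (rule integrable_pair_mult_cnj[OF _ u_bound[where t=t]]) simp
  have "(\<Sum>t<T. (cmod (\<integral>x. u t x \<partial>M))\<^sup>2) = cmod (\<Sum>t<T. complex_of_real ((cmod (\<integral>x. u t x \<partial>M))\<^sup>2))"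
    by (simp only: of_real_sum[symmetric] norm_of_real abs_of_nonneg[OF sum_nonneg[OF zero_le_power2]])
  also have "\<dots> = cmod (\<integral>z. (\<Sum>t<T. u t (fst z) * cnj (u t (snd z))) \<partial>(M \<Otimes>\<^sub>M M))"
    unfolding pair using u_integrable by (simp add: Bochner_Integration.integral_sum)
  also have "\<dots> \<le> (\<integral>z. cmod (\<Sum>t<T. u t (fst z) * cnj (u t (snd z))) \<partial>(M \<Otimes>\<^sub>M M))"
    by (rule integral_norm_bound)
  also have "\<dots> \<le> (\<integral>z. real T * B\<^sup>2 * W z \<partial>(M \<Otimes>\<^sub>M M))"
  proof (rule integral_mono)
    show "integrable (M \<Otimes>\<^sub>M M) (\<lambda>z. cmod (\<Sum>t<T. u t (fst z) * cnj (u t (snd z))))"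
      using u_integrable by (intro integrable_norm Bochner_Integration.integrable_sum)
    show "integrable (M \<Otimes>\<^sub>M M) (\<lambda>z. real T * B\<^sup>2 * W z)"
      unfolding W_def by (intro integrable_mult_right MM.integrable_const_bound[where B=1]) (auto simp: norm_cis_mean_le_1)
    fix z assume "z \<in> space (M \<Otimes>\<^sub>M M)"
    then have "cmod (a (fst z)) \<le> B" "cmod (a (snd z)) \<le> B"
      using bound by (auto simp: space_pair_measure)
    then have "cmod (a (fst z)) * cmod (a (snd z)) * (real T * W z) \<le> B * B * (real T * W z)"
      by (intro mult_right_mono mult_mono) (auto simp: W_def intro: order_trans[OF norm_ge_zero])
    then show "cmod (\<Sum>t<T. u t (fst z) * cnj (u t (snd z))) \<le> real T * B\<^sup>2 * W z"
      unfolding u_def sum_cis_mult_cnj by (simp add: norm_mult W_def power2_eq_square mult_ac)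
  qed
  finally show ?thesis
    by (simp add: u_def W_def)
qed

section \<open>Conditional expectation along a disintegration\<close>

lemma (in subprob_space) norm_integral_le_const:
  fixes f :: "'a \<Rightarrow> 'b::{banach, second_countable_topology}"
  assumes "f \<in> borel_measurable M" and bound: "\<And>x. x \<in> space M \<Longrightarrow> norm (f x) \<le> B"
  shows "norm (\<integral>x. f x \<partial>M) \<le> B"
proof -
  obtain x where "x \<in> space M"
    using subprob_not_empty by blast
  then have "0 \<le> B"
    using bound order_trans[OF norm_ge_zero] by blast
  have "norm (\<integral>x. f x \<partial>M) \<le> (\<integral>x. norm (f x) \<partial>M)"
    by (rule integral_norm_bound)
  also have "\<dots> \<le> (\<integral>x. B \<partial>M)"
    using assms \<open>0 \<le> B\<close> by (intro integral_mono integrable_const_bound[where B=B]) auto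
  also have "\<dots> \<le> B"
    using subprob_measure_le_1[of "space M"] \<open>0 \<le> B\<close> by (simp add: mult_left_le_one_le)
  finally show ?thesis .
qed

lemma borel_measurable_cond_exp_c [measurable]: "cond_exp_c M F u \<in> borel_measurable M"
  unfolding cond_exp_c_def borel_measurable_complex_iff by simp

lemma (in sigma_finite_subalgebra) cond_exp_c_cong_AE:
  assumes "AE x in M. u x = v x" and [measurable]: "u \<in> borel_measurable M" "v \<in> borel_measurable M"
  shows "AE x in M. cond_exp_c M F u x = cond_exp_c M F v x"
proof -
  have "AE x in M. real_cond_exp M F (\<lambda>x. Re (u x)) x = real_cond_exp M F (\<lambda>x. Re (v x)) x"
    using assms(1) by (intro real_cond_exp_cong) (auto elim: eventually_mono)
  moreover have "AE x in M. real_cond_exp M F (\<lambda>x. Im (u x)) x = real_cond_exp M F (\<lambda>x. Im (v x)) x"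
    using assms(1) by (intro real_cond_exp_cong) (auto elim: eventually_mono)
  ultimately show ?thesis
    by eventually_elim (simp add: cond_exp_c_def)
qed

lemma (in sigma_finite_subalgebra) integral_norm_cond_exp_c_sq_cong_AE:
  assumes "AE x in M. u x = v x" and "u \<in> borel_measurable M" "v \<in> borel_measurable M"
  shows "(\<integral>x. (cmod (cond_exp_c M F u x))\<^sup>2 \<partial>M) = (\<integral>x. (cmod (cond_exp_c M F v x))\<^sup>2 \<partial>M)"
  using cond_exp_c_cong_AE[OF assms] by (intro integral_cong_AE) (auto elim: eventually_mono)

lemma Linfty_bounded_representative:
  assumes "Linfty M a"
  obtains a' B where "a' \<in> borel_measurable M" and "\<And>x. cmod (a' x) \<le> B" and "AE x in M. a' x = a x"
proof -
  obtain B where a: "a \<in> borel_measurable M" and B: "AE x in M. cmod (a x) \<le> B"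
    using assms by (auto simp: Linfty_def)
  define a' where "a' x = (if cmod (a x) \<le> B then a x else 0)" for x
  have "a' \<in> borel_measurable M"
    unfolding a'_def using a by measurable
  moreover have "cmod (a' x) \<le> max B 0" for x
    by (auto simp: a'_def)
  moreover have "AE x in M. a' x = a x"
    using B by eventually_elim (simp add: a'_def)
  ultimately show thesis
    using that by blast
qed

locale quotient_disintegration =
  fixes M :: "'x measure" and N :: "'y measure" and q :: "'x \<Rightarrow> 'y" and K :: "'y \<Rightarrow> 'x measure"
  assumes prob_space_M: "prob_space M"
    and q_measurable: "q \<in> measurable M N" and distr_q: "distr M N q = N"
    and disintegration: "disintegration M N q K"
begin

abbreviation Fq :: "'x measure" where
  "Fq \<equiv> vimage_algebra (space M) q N"

lemma prob_space_N: "prob_space N"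
  using prob_space.prob_space_distr[OF prob_space_M q_measurable] distr_q by simp

lemma kernel_measurable: "K \<in> measurable N (subprob_algebra M)"
  using disintegration by (simp add: disintegration_def)

lemma sets_K: "y \<in> space N \<Longrightarrow> sets (K y) = sets M"
  using sets_kernel[OF kernel_measurable] by blast

lemma space_K: "y \<in> space N \<Longrightarrow> space (K y) = space M"
  using sets_eq_imp_space_eq[OF sets_K] .

lemma borel_measurable_K:
  "y \<in> space N \<Longrightarrow> f \<in> borel_measurable M \<Longrightarrow> f \<in> borel_measurable (K y)"
  using measurable_cong_sets[OF sets_K refl] by blast

lemma subprob_space_K: "y \<in> space N \<Longrightarrow> subprob_space (K y)"
  using subprob_space_kernel[OF kernel_measurable] .

lemma M_eq_bind: "M = N \<bind> K"
proof (rule measure_eqI)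
  have "space N \<noteq> {}"
    using prob_space.not_empty[OF prob_space_N] .
  then show "sets M = sets (N \<bind> K)"
    using sets_bind[OF sets_K \<open>space N \<noteq> {}\<close>] by simp
  show "emeasure M A = emeasure (N \<bind> K) A" if "A \<in> sets M" for A
    using disintegration that \<open>space N \<noteq> {}\<close>
    by (simp add: disintegration_def emeasure_bind[OF _ kernel_measurable])
qed

lemma AE_kernel_fibre: "AE y in N. AE x in K y. q x = y"
proof -
  have "AE y in N. prob_space (K y) \<and> emeasure (K y) (q -` {y} \<inter> space M) = 1"
    using disintegration by (auto simp: disintegration_def)
  then show ?thesis
  proof (rule eventually_mono)
    fix y assume y: "prob_space (K y) \<and> emeasure (K y) (q -` {y} \<inter> space M) = 1"
    then interpret prob_space "K y" by simp
    have "AE x in K y. x \<in> q -` {y} \<inter> space M"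
      using y by (intro AE_prob_1) (simp add: emeasure_eq_measure)
    then show "AE x in K y. q x = y"
      by (rule eventually_mono) simp
  qed
qed

lemma borel_measurable_kernel_integral [measurable]:
  fixes v :: "'x \<Rightarrow> 'b::{banach, second_countable_topology}"
  assumes "v \<in> borel_measurable M"
  shows "(\<lambda>y. \<integral>x. v x \<partial>K y) \<in> borel_measurable N"
  by (rule measurable_compose[OF kernel_measurable integral_measurable_subprob_algebra[OF assms]])

lemma norm_kernel_integral_le:
  fixes v :: "'x \<Rightarrow> 'b::{banach, second_countable_topology}"
  assumes "v \<in> borel_measurable M" and "\<And>x. x \<in> space M \<Longrightarrow> norm (v x) \<le> B" and "y \<in> space N"
  shows "norm (\<integral>x. v x \<partial>K y) \<le> B"
proof -
  interpret subprob_space "K y"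
    using subprob_space_K[OF assms(3)] .
  show ?thesis
    using assms space_K[OF assms(3)] borel_measurable_K[OF assms(3,1)]
    by (intro norm_integral_le_const) auto
qed

lemma integral_eq_kernel_integral:
  fixes v :: "'x \<Rightarrow> real"
  assumes "v \<in> borel_measurable M" and "\<And>x. x \<in> space M \<Longrightarrow> \<bar>v x\<bar> \<le> B"
  shows "(\<integral>x. v x \<partial>M) = (\<integral>y. (\<integral>x. v x \<partial>K y) \<partial>N)"
proof -
  interpret prob_space N
    by (rule prob_space_N)
  have "AE y in N. emeasure (K y) (space (K y)) \<le> ennreal 1"
    using subprob_space.subprob_emeasure_le_1[OF subprob_space_K] by (intro AE_I2) simp
  then show ?thesis
    by (subst M_eq_bind) (rule integral_bind[OF assms kernel_measurable finite_measure_axioms])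
qed

lemma subalgebra_Fq: "subalgebra M Fq"
  unfolding subalgebra_def
proof
  have "q \<in> space M \<rightarrow> space N"
    using measurable_space[OF q_measurable] by blast
  then show "sets Fq \<subseteq> sets M"
    using q_measurable by (auto simp: sets_vimage_algebra2 intro: measurable_sets)
qed simp

lemma sigma_finite_subalgebra_Fq: "sigma_finite_subalgebra M Fq"
proof (rule finite_measure_subalgebra_is_sigma_finite)
  interpret prob_space M
    by (rule prob_space_M)
  show "finite_measure_subalgebra M Fq"
    by unfold_locales (rule subalgebra_Fq)
qed

lemma set_integral_preimage_eq_kernel_integral:
  fixes v :: "'x \<Rightarrow> real"
  assumes v[measurable]: "v \<in> borel_measurable M" and bound: "\<And>x. x \<in> space M \<Longrightarrow> \<bar>v x\<bar> \<le> B"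
    and C[measurable]: "C \<in> sets N"
  shows "(\<integral>x\<in>q -` C \<inter> space M. v x \<partial>M) = (\<integral>x\<in>q -` C \<inter> space M. (\<integral>z. v z \<partial>K (q x)) \<partial>M)"
proof -
  let ?A = "q -` C \<inter> space M"
  have [measurable]: "?A \<in> sets M"
    using q_measurable by (intro measurable_sets) auto
  have fibre: "AE y in N. (\<integral>x. indicator ?A x * v x \<partial>K y) = indicator C y * (\<integral>z. v z \<partial>K y)"
    using AE_kernel_fibre AE_space
  proof eventually_elim
    case (elim y)
    have "(\<integral>x. indicator ?A x * v x \<partial>K y) = (\<integral>x. indicator C y * v x \<partial>K y)"
    proof (rule integral_cong_AE)
      show "(\<lambda>x. indicator ?A x * v x) \<in> borel_measurable (K y)"
        "(\<lambda>x. indicator C y * v x) \<in> borel_measurable (K y)"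
        using elim(2) by (auto intro!: borel_measurable_K)
      show "AE x in K y. indicator ?A x * v x = indicator C y * v x"
        using elim(1) AE_space by eventually_elim (auto simp: indicator_def space_K[OF elim(2)])
    qed
    then show ?case
      by simp
  qed
  have "(\<integral>x\<in>?A. v x \<partial>M) = (\<integral>x. indicator ?A x * v x \<partial>M)"
    by (simp add: set_lebesgue_integral_def)
  also have "\<dots> = (\<integral>y. (\<integral>x. indicator ?A x * v x \<partial>K y) \<partial>N)"
    using bound by (intro integral_eq_kernel_integral[where B=B]) (measurable, force simp: indicator_def)
  also have "\<dots> = (\<integral>y. indicator C y * (\<integral>z. v z \<partial>K y) \<partial>N)"
    using fibre by (intro integral_cong_AE) measurable
  also have "\<dots> = (\<integral>x. indicator C (q x) * (\<integral>z. v z \<partial>K (q x)) \<partial>M)"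
    by (subst distr_q[symmetric], rule integral_distr[OF q_measurable]) measurable
  also have "\<dots> = (\<integral>x\<in>?A. (\<integral>z. v z \<partial>K (q x)) \<partial>M)"
    unfolding set_lebesgue_integral_def
    by (intro Bochner_Integration.integral_cong) (auto simp: indicator_def)
  finally show ?thesis .
qed

lemma real_cond_exp_eq_kernel_integral:
  assumes v[measurable]: "v \<in> borel_measurable M" and bound: "\<And>x. x \<in> space M \<Longrightarrow> \<bar>v x\<bar> \<le> B"
  shows "AE x in M. real_cond_exp M Fq v x = (\<integral>z. v z \<partial>K (q x))"
proof (rule sigma_finite_subalgebra.real_cond_exp_charact[OF sigma_finite_subalgebra_Fq])
  interpret prob_space M
    by (rule prob_space_M)
  have q_space: "q \<in> space M \<rightarrow> space N"
    using measurable_space[OF q_measurable] by blast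
  show "integrable M v"
    using bound by (intro integrable_const_bound[where B=B]) auto
  show "integrable M (\<lambda>x. \<integral>z. v z \<partial>K (q x))"
    using norm_kernel_integral_le[OF v _ q_space[THEN funcset_mem]] bound
    by (intro integrable_const_bound[where B=B]) (auto intro: measurable_compose[OF q_measurable])
  show "(\<lambda>x. \<integral>z. v z \<partial>K (q x)) \<in> borel_measurable Fq"
    by (rule measurable_compose[OF measurable_vimage_algebra1[OF q_space]]) simp
  fix A assume "A \<in> sets Fq"
  then obtain C where "C \<in> sets N" and "A = q -` C \<inter> space M"
    by (auto simp: sets_vimage_algebra2[OF q_space])
  then show "(\<integral>x\<in>A. v x \<partial>M) = (\<integral>x\<in>A. (\<integral>z. v z \<partial>K (q x)) \<partial>M)"
    using set_integral_preimage_eq_kernel_integral[OF v bound] by simp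
qed

lemma cond_exp_c_eq_kernel_integral:
  fixes u :: "'x \<Rightarrow> complex"
  assumes u[measurable]: "u \<in> borel_measurable M" and bound: "\<And>x. x \<in> space M \<Longrightarrow> cmod (u x) \<le> B"
  shows "AE x in M. cond_exp_c M Fq u x = (\<integral>z. u z \<partial>K (q x))"
proof -
  have "AE x in M. real_cond_exp M Fq (\<lambda>x. Re (u x)) x = (\<integral>z. Re (u z) \<partial>K (q x))"
    using order_trans[OF abs_Re_le_cmod bound] by (intro real_cond_exp_eq_kernel_integral[where B=B]) auto
  moreover have "AE x in M. real_cond_exp M Fq (\<lambda>x. Im (u x)) x = (\<integral>z. Im (u z) \<partial>K (q x))"
    using order_trans[OF abs_Im_le_cmod bound] by (intro real_cond_exp_eq_kernel_integral[where B=B]) auto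
  ultimately show ?thesis
    using AE_space
  proof eventually_elim
    case (elim x)
    then have "q x \<in> space N"
      using measurable_space[OF q_measurable] by blast
    interpret subprob_space "K (q x)"
      using subprob_space_K[OF \<open>q x \<in> space N\<close>] .
    have "integrable (K (q x)) u"
      using bound space_K[OF \<open>q x \<in> space N\<close>] borel_measurable_K[OF \<open>q x \<in> space N\<close> u]
      by (intro integrable_const_bound[where B=B]) auto
    then show ?case
      using elim by (intro complex_eqI) (simp_all add: cond_exp_c_def)
  qed
qed

lemma integral_norm_cond_exp_c_sq:
  fixes u :: "'x \<Rightarrow> complex"
  assumes u[measurable]: "u \<in> borel_measurable M" and bound: "\<And>x. x \<in> space M \<Longrightarrow> cmod (u x) \<le> B"
  shows "(\<integral>x. (cmod (cond_exp_c M Fq u x))\<^sup>2 \<partial>M) = (\<integral>y. (cmod (\<integral>z. u z \<partial>K y))\<^sup>2 \<partial>N)"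
proof -
  have "(\<integral>x. (cmod (cond_exp_c M Fq u x))\<^sup>2 \<partial>M) = (\<integral>x. (cmod (\<integral>z. u z \<partial>K (q x)))\<^sup>2 \<partial>M)"
    using cond_exp_c_eq_kernel_integral[OF u bound] q_measurable
    by (intro integral_cong_AE) (auto elim: eventually_mono)
  also have "\<dots> = (\<integral>y. (cmod (\<integral>z. u z \<partial>K y))\<^sup>2 \<partial>N)"
    by (subst distr_q[symmetric], rule integral_distr[symmetric, OF q_measurable]) measurable
  finally show ?thesis .
qed

section \<open>Averaging over the fibre products\<close>

lemma kernel_pair_measurable:
  "(\<lambda>y. K y \<Otimes>\<^sub>M K y) \<in> measurable N (subprob_algebra (M \<Otimes>\<^sub>M M))"
  by (rule measurable_pair_measure[OF kernel_measurable kernel_measurable])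

lemma AE_AE_kernel_pair:
  assumes [measurable]: "Measurable.pred (M \<Otimes>\<^sub>M M) P"
    and null: "emeasure N {y \<in> space N. emeasure (K y \<Otimes>\<^sub>M K y) {z \<in> space (M \<Otimes>\<^sub>M M). \<not> P z} > 0} = 0"
  shows "AE y in N. AE z in K y \<Otimes>\<^sub>M K y. P z"
proof -
  let ?D = "{z \<in> space (M \<Otimes>\<^sub>M M). \<not> P z}"
  have "{y \<in> space N. emeasure (K y \<Otimes>\<^sub>M K y) ?D > 0} \<in> sets N"
    using measurable_emeasure_subprob_algebra[of ?D] kernel_pair_measurable by measurable
  then have "AE y in N. \<not> emeasure (K y \<Otimes>\<^sub>M K y) ?D > 0"
    using null by (intro AE_I'[where N="{y \<in> space N. emeasure (K y \<Otimes>\<^sub>M K y) ?D > 0}"])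
      (auto simp: zero_less_iff_neq_zero)
  then show ?thesis
    using AE_space
  proof eventually_elim
    case (elim y)
    have sets_eq: "sets (K y \<Otimes>\<^sub>M K y) = sets (M \<Otimes>\<^sub>M M)"
      using sets_kernel[OF kernel_pair_measurable \<open>y \<in> space N\<close>] .
    have "?D \<in> sets (K y \<Otimes>\<^sub>M K y)"
      unfolding sets_eq by measurable
    moreover have "{z \<in> space (K y \<Otimes>\<^sub>M K y). \<not> P z} = ?D"
      using sets_eq_imp_space_eq[OF sets_eq] by simp
    ultimately show ?case
      using elim(1) by (simp add: AE_iff_measurable)
  qed
qed

lemma borel_measurable_K_pair:
  assumes "y \<in> space N" and "w \<in> borel_measurable (M \<Otimes>\<^sub>M M)"
  shows "w \<in> borel_measurable (K y \<Otimes>\<^sub>M K y)"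
  using assms(2) measurable_cong_sets[OF sets_kernel[OF kernel_pair_measurable assms(1)] refl] by blast

definition fibre_cis_mean :: "('x \<Rightarrow> real) \<Rightarrow> nat \<Rightarrow> 'y \<Rightarrow> real" where
  "fibre_cis_mean \<psi> T y = (\<integral>z. cmod (cis_mean T (\<psi> (fst z) - \<psi> (snd z))) \<partial>(K y \<Otimes>\<^sub>M K y))"

lemma borel_measurable_fibre_cis_mean [measurable]:
  assumes [measurable]: "\<psi> \<in> borel_measurable M"
  shows "fibre_cis_mean \<psi> T \<in> borel_measurable N"
  unfolding fibre_cis_mean_def
  by (rule measurable_compose[OF kernel_pair_measurable integral_measurable_subprob_algebra]) measurable

lemma fibre_cis_mean_le_1:
  assumes [measurable]: "\<psi> \<in> borel_measurable M" and "y \<in> space N"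
  shows "norm (fibre_cis_mean \<psi> T y) \<le> 1"
proof -
  interpret subprob_space "K y \<Otimes>\<^sub>M K y"
    using subprob_space_kernel[OF kernel_pair_measurable \<open>y \<in> space N\<close>] .
  show ?thesis
    unfolding fibre_cis_mean_def
    by (rule norm_integral_le_const[OF borel_measurable_K_pair[OF \<open>y \<in> space N\<close>]])
      (simp_all add: norm_cis_mean_le_1)
qed

lemma sum_integral_norm_cond_exp_c_cis_sq_le:
  fixes a :: "'x \<Rightarrow> complex" and \<psi> :: "'x \<Rightarrow> real"
  assumes a[measurable]: "a \<in> borel_measurable M" and bound: "\<And>x. x \<in> space M \<Longrightarrow> cmod (a x) \<le> B"
    and \<psi>[measurable]: "\<psi> \<in> borel_measurable M"
  shows "(\<Sum>t<T. \<integral>x. (cmod (cond_exp_c M Fq (\<lambda>x. cis (real t * \<psi> x) * a x) x))\<^sup>2 \<partial>M)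
    \<le> real T * B\<^sup>2 * (\<integral>y. fibre_cis_mean \<psi> T y \<partial>N)"
proof -
  interpret N: prob_space N
    by (rule prob_space_N)
  define h where "h t y = (\<integral>x. cis (real t * \<psi> x) * a x \<partial>K y)" for t y
  have u_bound: "cmod (cis (real t * \<psi> x) * a x) \<le> B" if "x \<in> space M" for t x
    using bound[OF that] by (simp add: norm_mult)
  have h_integrable: "integrable N (\<lambda>y. (cmod (h t y))\<^sup>2)" for t
  proof (rule N.integrable_const_bound[where B="B\<^sup>2"])
    show "AE y in N. norm ((cmod (h t y))\<^sup>2) \<le> B\<^sup>2"
      using norm_kernel_integral_le[OF _ u_bound] unfolding h_def
      by (intro AE_I2) (auto intro!: power_mono)
  qed (simp add: h_def)
  have "(\<Sum>t<T. \<integral>x. (cmod (cond_exp_c M Fq (\<lambda>x. cis (real t * \<psi> x) * a x) x))\<^sup>2 \<partial>M)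
      = (\<integral>y. (\<Sum>t<T. (cmod (h t y))\<^sup>2) \<partial>N)"
    using h_integrable
    by (simp add: integral_norm_cond_exp_c_sq[OF _ u_bound] h_def Bochner_Integration.integral_sum)
  also have "\<dots> \<le> (\<integral>y. real T * B\<^sup>2 * fibre_cis_mean \<psi> T y \<partial>N)"
  proof (rule integral_mono)
    show "integrable N (\<lambda>y. \<Sum>t<T. (cmod (h t y))\<^sup>2)"
      using h_integrable by (rule Bochner_Integration.integrable_sum)
    show "integrable N (\<lambda>y. real T * B\<^sup>2 * fibre_cis_mean \<psi> T y)"
      using fibre_cis_mean_le_1[OF \<psi>]
      by (intro integrable_mult_right N.integrable_const_bound[where B=1] AE_I2) auto
    fix y assume "y \<in> space N"
    interpret subprob_space "K y"
      using subprob_space_K[OF \<open>y \<in> space N\<close>] .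
    show "(\<Sum>t<T. (cmod (h t y))\<^sup>2) \<le> real T * B\<^sup>2 * fibre_cis_mean \<psi> T y"
      unfolding h_def fibre_cis_mean_def using bound space_K[OF \<open>y \<in> space N\<close>]
      by (intro sum_norm_integral_cis_sq_le borel_measurable_K[OF \<open>y \<in> space N\<close>]) auto
  qed
  finally show ?thesis
    by simp
qed

lemma integral_fibre_cis_mean_tendsto_0:
  assumes \<psi>[measurable]: "\<psi> \<in> borel_measurable M" and range: "\<And>x. \<psi> x \<in> {0..<2*pi}"
    and separated: "AE y in N. AE z in K y \<Otimes>\<^sub>M K y. \<psi> (fst z) \<noteq> \<psi> (snd z)"
  shows "(\<lambda>T. \<integral>y. fibre_cis_mean \<psi> T y \<partial>N) \<longlonglongrightarrow> 0"
proof -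
  interpret N: prob_space N
    by (rule prob_space_N)
  have "(\<lambda>T. \<integral>y. fibre_cis_mean \<psi> T y \<partial>N) \<longlonglongrightarrow> (\<integral>y. 0 \<partial>N)"
  proof (rule integral_dominated_convergence[where w="\<lambda>_. 1"])
    show "AE y in N. norm (fibre_cis_mean \<psi> T y) \<le> 1" for T
      using fibre_cis_mean_le_1[OF \<psi>] by (intro AE_I2) auto
    show "AE y in N. (\<lambda>T. fibre_cis_mean \<psi> T y) \<longlonglongrightarrow> 0"
      using separated AE_space
    proof eventually_elim
      case (elim y)
      interpret subprob_space "K y \<Otimes>\<^sub>M K y"
        using subprob_space_kernel[OF kernel_pair_measurable \<open>y \<in> space N\<close>] .
      have "\<bar>\<psi> (fst z) - \<psi> (snd z)\<bar> < 2 * pi" for z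
        using range[of "fst z"] range[of "snd z"] by auto
      then show ?case
        using elim(1) unfolding fibre_cis_mean_def
        by (intro integral_cis_mean_tendsto_0 borel_measurable_K_pair[OF \<open>y \<in> space N\<close>]) auto
    qed
  qed auto
  then show ?thesis
    by simp
qed

lemma cond_exp_c_cis_lower_bound_le_0_bounded:
  fixes a :: "nat \<Rightarrow> 'x \<Rightarrow> complex" and B :: "nat \<Rightarrow> real"
  assumes \<psi>[measurable]: "\<psi> \<in> borel_measurable M" and range: "\<And>x. \<psi> x \<in> {0..<2*pi}"
    and separated: "AE y in N. AE z in K y \<Otimes>\<^sub>M K y. \<psi> (fst z) \<noteq> \<psi> (snd z)"
    and a: "\<And>i. i < n \<Longrightarrow> a i \<in> borel_measurable M"
    and bound: "\<And>i x. i < n \<Longrightarrow> x \<in> space M \<Longrightarrow> cmod (a i x) \<le> B i"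
    and lower: "\<And>t. C \<le> (\<Sum>i<n. \<integral>x. (cmod (cond_exp_c M Fq (\<lambda>x. cis (real t * \<psi> x) * a i x) x))\<^sup>2 \<partial>M)"
  shows "C \<le> 0"
proof -
  define W where "W T = (\<integral>y. fibre_cis_mean \<psi> T y \<partial>N)" for T
  have "C \<le> (\<Sum>i<n. (B i)\<^sup>2) * W T" if "T > 0" for T
  proof -
    have "real T * C
        \<le> (\<Sum>t<T. \<Sum>i<n. \<integral>x. (cmod (cond_exp_c M Fq (\<lambda>x. cis (real t * \<psi> x) * a i x) x))\<^sup>2 \<partial>M)"
      using sum_mono[OF lower, of "{..<T}"] by simp
    also have "\<dots> = (\<Sum>i<n. \<Sum>t<T. \<integral>x. (cmod (cond_exp_c M Fq (\<lambda>x. cis (real t * \<psi> x) * a i x) x))\<^sup>2 \<partial>M)"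
      by (rule sum.swap)
    also have "\<dots> \<le> (\<Sum>i<n. real T * (B i)\<^sup>2 * W T)"
      unfolding W_def using a bound by (intro sum_mono sum_integral_norm_cond_exp_c_cis_sq_le) auto
    also have "\<dots> = real T * ((\<Sum>i<n. (B i)\<^sup>2) * W T)"
      by (simp add: sum_distrib_left sum_distrib_right mult_ac)
    finally show ?thesis
      using \<open>T > 0\<close> by simp
  qed
  moreover have "(\<lambda>T. (\<Sum>i<n. (B i)\<^sup>2) * W T) \<longlonglongrightarrow> (\<Sum>i<n. (B i)\<^sup>2) * 0"
    unfolding W_def using integral_fibre_cis_mean_tendsto_0[OF \<psi> range separated]
    by (rule tendsto_mult_left)
  ultimately show ?thesis
    using LIMSEQ_le_const[where a=C] by (metis (no_types, lifting) mult_zero_right Suc_le_eq)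
qed

lemma cond_exp_c_cis_lower_bound_le_0:
  fixes a :: "nat \<Rightarrow> 'x \<Rightarrow> complex"
  assumes \<psi>[measurable]: "\<psi> \<in> borel_measurable M" and range: "\<And>x. \<psi> x \<in> {0..<2*pi}"
    and separated: "AE y in N. AE z in K y \<Otimes>\<^sub>M K y. \<psi> (fst z) \<noteq> \<psi> (snd z)"
    and a: "\<And>i. i < n \<Longrightarrow> Linfty M (a i)"
    and lower: "\<And>t. C \<le> (\<Sum>i<n. \<integral>x. (cmod (cond_exp_c M Fq (\<lambda>x. cis (real t * \<psi> x) * a i x) x))\<^sup>2 \<partial>M)"
  shows "C \<le> 0"
proof -
  have "\<exists>b B. b \<in> borel_measurable M \<and> (\<forall>x. cmod (b x) \<le> B) \<and> (AE x in M. b x = a i x)" if "i < n" for i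
    using Linfty_bounded_representative[OF a[OF that]] by blast
  then obtain b B where b: "\<And>i. i < n \<Longrightarrow> b i \<in> borel_measurable M" "\<And>i x. i < n \<Longrightarrow> cmod (b i x) \<le> B i"
    "\<And>i. i < n \<Longrightarrow> AE x in M. b i x = a i x"
    by metis
  have lower_b: "C \<le> (\<Sum>i<n. \<integral>x. (cmod (cond_exp_c M Fq (\<lambda>x. cis (real t * \<psi> x) * b i x) x))\<^sup>2 \<partial>M)" for t
  proof -
    have "(\<integral>x. (cmod (cond_exp_c M Fq (\<lambda>x. cis (real t * \<psi> x) * a i x) x))\<^sup>2 \<partial>M)
        = (\<integral>x. (cmod (cond_exp_c M Fq (\<lambda>x. cis (real t * \<psi> x) * b i x) x))\<^sup>2 \<partial>M)" if "i < n" for i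
    proof -
      have [measurable]: "a i \<in> borel_measurable M" "b i \<in> borel_measurable M"
        using a[OF that] b(1)[OF that] by (auto simp: Linfty_def)
      have "AE x in M. cis (real t * \<psi> x) * a i x = cis (real t * \<psi> x) * b i x"
        using b(3)[OF that] by eventually_elim simp
      then show ?thesis
        by (rule sigma_finite_subalgebra.integral_norm_cond_exp_c_sq_cong_AE[OF sigma_finite_subalgebra_Fq]) measurable
    qed
    then have "(\<Sum>i<n. \<integral>x. (cmod (cond_exp_c M Fq (\<lambda>x. cis (real t * \<psi> x) * a i x) x))\<^sup>2 \<partial>M)
        = (\<Sum>i<n. \<integral>x. (cmod (cond_exp_c M Fq (\<lambda>x. cis (real t * \<psi> x) * b i x) x))\<^sup>2 \<partial>M)"
      by (intro sum.cong) auto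
    then show ?thesis
      using lower[of t] by simp
  qed
  have bound: "cmod (b i x) \<le> B i" if "i < n" "x \<in> space M" for i x
    using b(2)[OF that(1)] .
  show ?thesis
    by (rule cond_exp_c_cis_lower_bound_le_0_bounded[where a=b and B=B, OF \<psi> range separated b(1) bound lower_b])
qed

end

theorem lemma1p3p3:
  fixes M :: "'x::polish_space measure" and N :: "'y::polish_space measure"
    and R :: "'z::polish_space measure"
    and q :: "'x \<Rightarrow> 'y" and p :: "'x \<Rightarrow> 'z"
    and a :: "nat \<Rightarrow> 'x \<Rightarrow> complex" and n :: nat and C :: real
  assumes "standard_prob_space M" and "standard_prob_space N" and "standard_prob_space R"
    and "mp_quotient_map M N q" and "mp_quotient_map M R p"
    and "\<And>i. i < n \<Longrightarrow> Linfty M (a i)"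
    and "C > 0"
    and "\<And>f. f \<in> borel_measurable R \<Longrightarrow> (AE z in R. cmod (f z) = 1) \<Longrightarrow>
          (\<Sum>i<n. \<integral>x. (cmod (cond_exp_c M (vimage_algebra (space M) q N)
                                   (\<lambda>x. f (p x) * a i x) x))\<^sup>2 \<partial>M) \<ge> C"
  shows "locally_factors M N q p"
proof (rule ccontr)
  have p[measurable]: "p \<in> measurable M R" and "sets R = sets borel"
    using assms(3,5) unfolding mp_quotient_map_def standard_prob_space_def by blast+
  assume "\<not> locally_factors M N q p"
  then obtain K where "disintegration M N q K" and null:
    "emeasure N {y \<in> space N.
       emeasure (K y \<Otimes>\<^sub>M K y) {(x1, x2) \<in> space M \<times> space M. p x1 = p x2} > 0} = 0"
    using not_gr_zero unfolding locally_factors_def by blast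
  interpret quotient_disintegration M N q K
    using assms(1,4) \<open>disintegration M N q K\<close>
    unfolding quotient_disintegration_def standard_prob_space_def mp_quotient_map_def by blast
  obtain \<phi> :: "'z \<Rightarrow> real" where \<phi>: "\<phi> \<in> borel_measurable borel" "inj \<phi>" "range \<phi> \<subseteq> {0..<2*pi}"
    using exists_inj_borel_measurable_real by blast
  have [measurable]: "\<phi> \<in> borel_measurable R"
    using \<phi>(1) measurable_cong_sets[OF \<open>sets R = sets borel\<close> refl] by blast
  have "{(x1, x2) \<in> space M \<times> space M. p x1 = p x2}
      = {z \<in> space (M \<Otimes>\<^sub>M M). \<not> \<phi> (p (fst z)) \<noteq> \<phi> (p (snd z))}"
    using \<phi>(2) by (auto simp: space_pair_measure inj_eq)
  then have separated: "AE y in N. AE z in K y \<Otimes>\<^sub>M K y. \<phi> (p (fst z)) \<noteq> \<phi> (p (snd z))"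
    using null by (intro AE_AE_kernel_pair) simp_all
  have characters: "(\<lambda>z. cis (real t * \<phi> z)) \<in> borel_measurable R" for t
    by measurable
  have "C \<le> (\<Sum>i<n. \<integral>x. (cmod (cond_exp_c M Fq (\<lambda>x. cis (real t * \<phi> (p x)) * a i x) x))\<^sup>2 \<partial>M)" for t
    using assms(8)[OF characters] by simp
  moreover have "\<phi> (p x) \<in> {0..<2*pi}" for x
    using \<phi>(3) by blast
  ultimately have "C \<le> 0"
    by (intro cond_exp_c_cis_lower_bound_le_0[OF _ _ separated assms(6)]) auto
  then show False
    using \<open>C > 0\<close> by simp
qed

end
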